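(* Suppose $\mathbf v_1=(v_{11},v_{12})\neq0$, $\mathbf v_2=(v_{21},v_{22})\neq0$ and $d\neq0$. Then for every point $[u,y_1,y_2]\in Z(\mathbf v,d)$ not in $Z(\mathbf v,d)\cap G(\mathbf v,d)$, there is exactly one point of $HC_F(\mathbf v,d)$ mapped to $[u,y_1,y_2]$ by $\rho$.
   Context: On $\mathbb{C}P^4$ with coordinates $[u,y_1,y_2,r_1,r_2]$, let $L_1=v_{11}(u-y_1)-v_{12}y_2$, $L_2=-v_{21}(u+y_1)-v_{22}y_2$, $f_1=(u-y_1)^2+y_2^2$, $f_2=(u+y_1)^2+y_2^2$, and $HC_F(\mathbf v,d)=\{f_1=r_1^2,\ f_2=r_2^2,\ L_2r_1-L_1r_2-dr_1r_2=0\}$. Let $Z(\mathbf v,d)\subset\mathbb{C}P^2$ (coordinates $[u,y_1,y_2]$) be the zero set of $h=(L_2^2f_1+L_1^2f_2-d^2f_1f_2)^2-4L_1^2L_2^2f_1f_2$, let $G(\mathbf v,d)=\{[u,y_1,y_2]\in\mathbb{C}P^2: L_1L_2=0\}$, and let $\rho:HC_F(\mathbf v,d)\to Z(\mathbf v,d)$ be $\rho([u,y_1,y_2,r_1,r_2])=[u,y_1,y_2]$. Parameters are complex. *)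

theory Defs
  imports Complex_Main
begin

text \<open>Points of CP^2 and CP^4 are represented by nonzero homogeneous coordinate
tuples; two tuples represent the same projective point iff they are proportional
by a nonzero complex scalar.\<close>

type_synonym hc3 = "complex \<times> complex \<times> complex"
type_synonym hc5 = "complex \<times> complex \<times> complex \<times> complex \<times> complex"

definition proj_eq3 :: "hc3 \<Rightarrow> hc3 \<Rightarrow> bool" where
  "proj_eq3 p q \<longleftrightarrow> (\<exists>c. c \<noteq> 0 \<and>
     (case p of (a,b,e) \<Rightarrow> case q of (a',b',e') \<Rightarrow> a = c*a' \<and> b = c*b' \<and> e = c*e'))"

definition proj_eq5 :: "hc5 \<Rightarrow> hc5 \<Rightarrow> bool" where
  "proj_eq5 p q \<longleftrightarrow> (\<exists>c. c \<noteq> 0 \<and>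
     (case p of (a,b,e,s,t) \<Rightarrow> case q of (a',b',e',s',t') \<Rightarrow>
        a = c*a' \<and> b = c*b' \<and> e = c*e' \<and> s = c*s' \<and> t = c*t'))"

definition L1 :: "complex \<Rightarrow> complex \<Rightarrow> complex \<Rightarrow> complex \<Rightarrow> complex \<Rightarrow> complex" where
  "L1 v11 v12 u y1 y2 = v11 * (u - y1) - v12 * y2"

definition L2 :: "complex \<Rightarrow> complex \<Rightarrow> complex \<Rightarrow> complex \<Rightarrow> complex \<Rightarrow> complex" where
  "L2 v21 v22 u y1 y2 = - v21 * (u + y1) - v22 * y2"

definition f1 :: "complex \<Rightarrow> complex \<Rightarrow> complex \<Rightarrow> complex" where
  "f1 u y1 y2 = (u - y1)^2 + y2^2"

definition f2 :: "complex \<Rightarrow> complex \<Rightarrow> complex \<Rightarrow> complex" where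
  "f2 u y1 y2 = (u + y1)^2 + y2^2"

definition HC_F :: "complex \<Rightarrow> complex \<Rightarrow> complex \<Rightarrow> complex \<Rightarrow> complex \<Rightarrow> hc5 set" where
  "HC_F v11 v12 v21 v22 d = {(u,y1,y2,r1,r2). (u,y1,y2,r1,r2) \<noteq> (0,0,0,0,0) \<and>
      f1 u y1 y2 = r1^2 \<and> f2 u y1 y2 = r2^2 \<and>
      L2 v21 v22 u y1 y2 * r1 - L1 v11 v12 u y1 y2 * r2 - d * r1 * r2 = 0}"

definition hpoly :: "complex \<Rightarrow> complex \<Rightarrow> complex \<Rightarrow> complex \<Rightarrow> complex \<Rightarrow> complex \<Rightarrow> complex \<Rightarrow> complex \<Rightarrow> complex" where
  "hpoly v11 v12 v21 v22 d u y1 y2 =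
     (let l1 = L1 v11 v12 u y1 y2; l2 = L2 v21 v22 u y1 y2; g1 = f1 u y1 y2; g2 = f2 u y1 y2 in
      (l2^2 * g1 + l1^2 * g2 - d^2 * g1 * g2)^2 - 4 * l1^2 * l2^2 * g1 * g2)"

definition Zset :: "complex \<Rightarrow> complex \<Rightarrow> complex \<Rightarrow> complex \<Rightarrow> complex \<Rightarrow> hc3 set" where
  "Zset v11 v12 v21 v22 d = {(u,y1,y2). (u,y1,y2) \<noteq> (0,0,0) \<and> hpoly v11 v12 v21 v22 d u y1 y2 = 0}"

definition Gset :: "complex \<Rightarrow> complex \<Rightarrow> complex \<Rightarrow> complex \<Rightarrow> hc3 set" where
  "Gset v11 v12 v21 v22 = {(u,y1,y2). (u,y1,y2) \<noteq> (0,0,0) \<and>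
      L1 v11 v12 u y1 y2 * L2 v21 v22 u y1 y2 = 0}"

definition rho :: "hc5 \<Rightarrow> hc3" where
  "rho p = (case p of (u,y1,y2,r1,r2) \<Rightarrow> (u,y1,y2))"

end

theory Submission
  imports Defs
begin

(* Over a point of Z off G the lifts to HC_F are the pairs (r1, r2) with r1^2 = f1, r2^2 = f2
   and L2 r1 - L1 r2 - d r1 r2 = 0.  Fixing square roots s1, s2 of f1, f2, the product of this
   bilinear form over the four sign choices (+-s1, +-s2) is exactly h, so h = 0 gives a lift.
   Two different sign choices can both satisfy the equation only if L1 L2 d r1 r2 = 0, which
   rules out a second lift once L1 L2 d <> 0 (the case r1 = r2 = 0 forces equality anyway).
   Finally HC_F is a cone, so a lift of p yields the lift c * q of c * p. *)

lemma product_over_signs: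
  fixes A B d s1 s2 :: "'a::idom"
  shows "(B*s1 - A*s2 - d*s1*s2) * (B*(-s1) - A*s2 - d*(-s1)*s2) *
         (B*s1 - A*(-s2) - d*s1*(-s2)) * (B*(-s1) - A*(-s2) - d*(-s1)*(-s2))
       = (B^2*s1^2 + A^2*s2^2 - d^2*s1^2*s2^2)^2 - 4*A^2*B^2*s1^2*s2^2"
  by algebra

lemma exists_signed_roots:
  fixes A B d F1 F2 s1 s2 :: "'a::idom"
  assumes "s1^2 = F1" and "s2^2 = F2"
    and "(B^2*F1 + A^2*F2 - d^2*F1*F2)^2 - 4*A^2*B^2*F1*F2 = 0"
  shows "\<exists>r1 r2. r1^2 = F1 \<and> r2^2 = F2 \<and> B*r1 - A*r2 - d*r1*r2 = 0"
proof -
  have "(B*s1 - A*s2 - d*s1*s2) * (B*(-s1) - A*s2 - d*(-s1)*s2) *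
        (B*s1 - A*(-s2) - d*s1*(-s2)) * (B*(-s1) - A*(-s2) - d*(-s1)*(-s2)) = 0"
    unfolding product_over_signs using assms by simp
  then show ?thesis
    using assms(1,2) by (simp only: mult_eq_0_iff) (metis power2_minus)
qed

lemma signed_roots_unique:
  fixes A B d r1 r2 t1 t2 :: "'a::{idom,ring_char_0}"
  assumes "A \<noteq> 0" and "B \<noteq> 0" and "d \<noteq> 0"
    and t1: "t1^2 = r1^2" and t2: "t2^2 = r2^2"
    and r: "B*r1 - A*r2 - d*r1*r2 = 0"
    and t: "B*t1 - A*t2 - d*t1*t2 = 0"
  shows "t1 = r1 \<and> t2 = r2"
proof (cases "t1 = r1 \<and> t2 = r2")
  case False
  from t1 t2 have "t1 = r1 \<or> t1 = -r1" and "t2 = r2 \<or> t2 = -r2"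
    by (simp_all add: power2_eq_iff)
  with False consider "t1 = -r1" "t2 = r2" | "t1 = r1" "t2 = -r2" | "t1 = -r1" "t2 = -r2"
    by blast
  then have "r1 = 0 \<or> r2 = 0"
  proof cases
    case 1
    have "2*A*r2 = 0"
      using r t[unfolded 1] by algebra
    then show ?thesis
      using assms(1) by simp
  next
    case 2
    have "2*B*r1 = 0"
      using r t[unfolded 2] by algebra
    then show ?thesis
      using assms(2) by simp
  next
    case 3
    have "2*d*r1*r2 = 0"
      using r t[unfolded 3] by algebra
    then show ?thesis
      using assms(3) by simp
  qed
  then have "r1 = 0 \<and> r2 = 0"
    using r assms(1,2) by auto
  then show ?thesis
    using t1 t2 by simp
qed

lemma L1_scale: "L1 v11 v12 (c*u) (c*y1) (c*y2) = c * L1 v11 v12 u y1 y2"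
  by (simp add: L1_def algebra_simps)

lemma L2_scale: "L2 v21 v22 (c*u) (c*y1) (c*y2) = c * L2 v21 v22 u y1 y2"
  by (simp add: L2_def algebra_simps)

lemma f1_scale: "f1 (c*u) (c*y1) (c*y2) = c^2 * f1 u y1 y2"
  by (simp add: f1_def power2_eq_square algebra_simps)

lemma f2_scale: "f2 (c*u) (c*y1) (c*y2) = c^2 * f2 u y1 y2"
  by (simp add: f2_def power2_eq_square algebra_simps)

lemma HC_F_scale:
  assumes "c \<noteq> 0"
  shows "(c*u, c*y1, c*y2, c*r1, c*r2) \<in> HC_F v11 v12 v21 v22 d \<longleftrightarrow>
         (u, y1, y2, r1, r2) \<in> HC_F v11 v12 v21 v22 d"
proof -
  have scaled: "L2 v21 v22 (c*u) (c*y1) (c*y2) * (c*r1) - L1 v11 v12 (c*u) (c*y1) (c*y2) * (c*r2)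
          - d * (c*r1) * (c*r2)
        = c^2 * (L2 v21 v22 u y1 y2 * r1 - L1 v11 v12 u y1 y2 * r2 - d * r1 * r2)"
    by (simp add: L1_scale L2_scale power2_eq_square algebra_simps)
  show ?thesis
    unfolding HC_F_def mem_Collect_eq prod.case scaled
    using assms by (simp add: f1_scale f2_scale power_mult_distrib)
qed

lemma HC_F_fiber_nonempty:
  assumes "(u, y1, y2) \<in> Zset v11 v12 v21 v22 d"
  shows "\<exists>r1 r2. (u, y1, y2, r1, r2) \<in> HC_F v11 v12 v21 v22 d"
proof -
  let ?A = "L1 v11 v12 u y1 y2" and ?B = "L2 v21 v22 u y1 y2"
    and ?F1 = "f1 u y1 y2" and ?F2 = "f2 u y1 y2"
  have "(?B^2 * ?F1 + ?A^2 * ?F2 - d^2 * ?F1 * ?F2)^2 - 4 * ?A^2 * ?B^2 * ?F1 * ?F2 = 0"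
    using assms by (simp add: Zset_def hpoly_def Let_def)
  then obtain r1 r2 where "r1^2 = ?F1" "r2^2 = ?F2" "?B * r1 - ?A * r2 - d * r1 * r2 = 0"
    using exists_signed_roots[OF power2_csqrt power2_csqrt] by blast
  then have "(u, y1, y2, r1, r2) \<in> HC_F v11 v12 v21 v22 d"
    using assms by (auto simp: HC_F_def Zset_def)
  then show ?thesis
    by blast
qed

lemma HC_F_fiber_unique:
  assumes "d \<noteq> 0" and "L1 v11 v12 u y1 y2 * L2 v21 v22 u y1 y2 \<noteq> 0"
    and "(u, y1, y2, r1, r2) \<in> HC_F v11 v12 v21 v22 d"
    and "(u, y1, y2, t1, t2) \<in> HC_F v11 v12 v21 v22 d"
  shows "t1 = r1 \<and> t2 = r2"
proof (rule signed_roots_unique)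
  show "L1 v11 v12 u y1 y2 \<noteq> 0" "L2 v21 v22 u y1 y2 \<noteq> 0" "d \<noteq> 0"
    using assms(1,2) by simp_all
  show "t1^2 = r1^2" "t2^2 = r2^2"
    using assms(3,4) unfolding HC_F_def mem_Collect_eq prod.case by metis+
  show "L2 v21 v22 u y1 y2 * r1 - L1 v11 v12 u y1 y2 * r2 - d * r1 * r2 = 0"
    "L2 v21 v22 u y1 y2 * t1 - L1 v11 v12 u y1 y2 * t2 - d * t1 * t2 = 0"
    using assms(3,4) unfolding HC_F_def mem_Collect_eq prod.case by blast+
qed

lemma HC_F_over_proj_point:
  assumes "q \<in> HC_F v11 v12 v21 v22 d" and "proj_eq3 (rho q) (u, y1, y2)"
  obtains c r1 r2 where "c \<noteq> 0" and "q = (c*u, c*y1, c*y2, c*r1, c*r2)"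
    and "(u, y1, y2, r1, r2) \<in> HC_F v11 v12 v21 v22 d"
proof -
  obtain u' y1' y2' r1' r2' where q: "q = (u', y1', y2', r1', r2')"
    by (cases q)
  obtain c where c: "c \<noteq> 0" and "u' = c*u" "y1' = c*y1" "y2' = c*y2"
    using assms(2) by (auto simp: proj_eq3_def rho_def q)
  then have q_scaled: "q = (c*u, c*y1, c*y2, c*(r1'/c), c*(r2'/c))"
    by (simp add: q)
  with assms(1) have "(u, y1, y2, r1'/c, r2'/c) \<in> HC_F v11 v12 v21 v22 d"
    using HC_F_scale[OF c] by (simp only:)
  with c q_scaled show ?thesis
    using that by blast
qed

theorem lemma8p5:
  fixes v11 v12 v21 v22 d :: complex and p :: hc3
  assumes "(v11, v12) \<noteq> (0, 0)" and "(v21, v22) \<noteq> (0, 0)" and "d \<noteq> 0"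
    and "p \<in> Zset v11 v12 v21 v22 d" and "p \<notin> Gset v11 v12 v21 v22"
  shows "\<exists>q \<in> HC_F v11 v12 v21 v22 d. proj_eq3 (rho q) p \<and>
           (\<forall>q' \<in> HC_F v11 v12 v21 v22 d. proj_eq3 (rho q') p \<longrightarrow> proj_eq5 q' q)"
proof -
  obtain u y1 y2 where p: "p = (u, y1, y2)"
    by (cases p)
  \<comment> \<open>The nondegeneracy of v1 and v2 is already implied by p not lying in G.\<close>
  have off_G: "L1 v11 v12 u y1 y2 * L2 v21 v22 u y1 y2 \<noteq> 0"
    using assms(4,5) unfolding p Zset_def Gset_def by blast
  obtain r1 r2 where q: "(u, y1, y2, r1, r2) \<in> HC_F v11 v12 v21 v22 d"
    using HC_F_fiber_nonempty assms(4) p by blast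
  have "proj_eq5 q' (u, y1, y2, r1, r2)"
    if q'_HC_F: "q' \<in> HC_F v11 v12 v21 v22 d" and q'_p: "proj_eq3 (rho q') p" for q'
  proof -
    obtain c r1' r2' where c: "c \<noteq> 0" and q': "q' = (c*u, c*y1, c*y2, c*r1', c*r2')"
      and "(u, y1, y2, r1', r2') \<in> HC_F v11 v12 v21 v22 d"
      by (rule HC_F_over_proj_point[OF q'_HC_F q'_p[unfolded p]])
    then have "r1' = r1 \<and> r2' = r2"
      using HC_F_fiber_unique[OF assms(3) off_G q] by blast
    with c show ?thesis
      unfolding proj_eq5_def q' by (intro exI[of _ c]) simp
  qed
  moreover have "proj_eq3 (rho (u, y1, y2, r1, r2)) p"
    unfolding proj_eq3_def rho_def p by (auto intro: exI[of _ 1])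
  ultimately show ?thesis
    using q by blast
qed

end
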